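(* Let $N\ge 4$ and let $\mathbf M$ be an $(N+1,2)$-admissible matrix whose core matrix $\widetilde{\mathbf M}$ is tridiagonal (for a suitable ordering of the transient states). Then $\mathbf M$ is micro-reversible, i.e. if $(\mu,\widetilde{\mathbf w},\widetilde{\mathbf z})$ is its characteristic triple then $\widetilde w_i\widetilde M_{ij}\widetilde z_j=\widetilde w_j\widetilde M_{ji}\widetilde z_i$ for all transient indices $i,j$.
   Context: Matrices are column-stochastic (nonnegative entries, columns summing to $1$). For $1\le k<N-1$, an $(N+1)\times(N+1)$ column-stochastic matrix $\mathbf M$ is $(N+1,k)$-admissible if, after a simultaneous permutation of rows and columns, $\mathbf M=\begin{pmatrix}\widetilde{\mathbf M}&\mathbf 0\\ \mathbf A&\mathbf I\end{pmatrix}$ with $\mathbf I$ the $k\times k$ identity, $\widetilde{\mathbf M}$ an irreducible $(N+1-k)\times(N+1-k)$ matrix (the core matrix, indexed by the transient states), and $\mathbf A$ a $k\times(N+1-k)$ matrix with no identically zero row. The core is strictly substochastic; let $\mu=\rho(\widetilde{\mathbf M})\in(0,1)$ be its spectral radius and let $\widetilde{\mathbf w},\widetilde{\mathbf z}$ be the unique positive left and right eigenvectors of $\widetilde{\mathbf M}$ for $\mu$, normalised by $\langle\widetilde{\mathbf w},\mathbf 1\rangle=\langle\widetilde{\mathbf w},\widetilde{\mathbf z}\rangle=1$; $(\mu,\widetilde{\mathbf w},\widetilde{\mathbf z})$ is the characteristic triple. $\mathbf M$ is called micro-reversible if $\widetilde w_i\widetilde M_{ij}\widetilde z_j=\widetilde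 w_j\widetilde M_{ji}\widetilde z_i$ for all transient $i,j$. *)

theory Defs
  imports "Jordan_Normal_Form.Spectral_Radius"
begin

definition col_stochastic :: "nat \<Rightarrow> (nat \<Rightarrow> nat \<Rightarrow> real) \<Rightarrow> bool" where
  "col_stochastic N M \<longleftrightarrow>
     (\<forall>i\<le>N. \<forall>j\<le>N. M i j \<ge> 0) \<and> (\<forall>j\<le>N. (\<Sum>i\<le>N. M i j) = 1)"

definition irreducible_on :: "nat set \<Rightarrow> (nat \<Rightarrow> nat \<Rightarrow> real) \<Rightarrow> bool" where
  "irreducible_on T M \<longleftrightarrow>
     (\<forall>i\<in>T. \<forall>j\<in>T. (i, j) \<in> {(a, b). a \<in> T \<and> b \<in> T \<and> M a b \<noteq> 0}\<^sup>*)"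

text \<open>(N+1,k)-admissibility with T the set of transient states (the complement
  of T in 0..N being the k absorbing states). After a simultaneous permutation
  putting T first, M has block form [[core, 0],[A, I]]: this is exactly that the
  columns of absorbing states are unit columns, A has no zero row, and the core
  restricted to T x T is irreducible.\<close>

definition admissible_wrt :: "nat \<Rightarrow> nat \<Rightarrow> (nat \<Rightarrow> nat \<Rightarrow> real) \<Rightarrow> nat set \<Rightarrow> bool" where
  "admissible_wrt N k M T \<longleftrightarrow>
     1 \<le> k \<and> k < N - 1 \<and> col_stochastic N M \<and>
     T \<subseteq> {..N} \<and> card ({..N} - T) = k \<and>
     (\<forall>j\<in>{..N} - T. \<forall>i\<le>N. M i j = (if i = j then 1 else 0)) \<and>
     (\<forall>i\<in>{..N} - T. \<exists>j\<in>T. M i j \<noteq> 0) \<and>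
     irreducible_on T M"

definition core_mat :: "(nat \<Rightarrow> nat \<Rightarrow> real) \<Rightarrow> nat set \<Rightarrow> complex mat" where
  "core_mat M T = mat (card T) (card T)
     (\<lambda>(a, b). complex_of_real (M (sorted_list_of_set T ! a) (sorted_list_of_set T ! b)))"

definition tridiagonal_on :: "nat set \<Rightarrow> (nat \<Rightarrow> nat \<Rightarrow> real) \<Rightarrow> bool" where
  "tridiagonal_on T M \<longleftrightarrow>
     (\<exists>\<sigma>. bij_betw \<sigma> {..<card T} T \<and>
        (\<forall>a<card T. \<forall>b<card T. (a + 1 < b \<or> b + 1 < a) \<longrightarrow> M (\<sigma> a) (\<sigma> b) = 0))"

definition char_triple ::
  "(nat \<Rightarrow> nat \<Rightarrow> real) \<Rightarrow> nat set \<Rightarrow> real \<Rightarrow> (nat \<Rightarrow> real) \<Rightarrow> (nat \<Rightarrow> real) \<Rightarrow> bool" where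
  "char_triple M T \<mu> w z \<longleftrightarrow>
     \<mu> = spectral_radius (core_mat M T) \<and>
     (\<forall>i\<in>T. w i > 0) \<and> (\<forall>i\<in>T. z i > 0) \<and>
     (\<forall>j\<in>T. (\<Sum>i\<in>T. w i * M i j) = \<mu> * w j) \<and>
     (\<forall>i\<in>T. (\<Sum>j\<in>T. M i j * z j) = \<mu> * z i) \<and>
     (\<Sum>i\<in>T. w i) = 1 \<and> (\<Sum>i\<in>T. w i * z i) = 1"

definition micro_reversible_wrt ::
  "(nat \<Rightarrow> nat \<Rightarrow> real) \<Rightarrow> nat set \<Rightarrow> (nat \<Rightarrow> real) \<Rightarrow> (nat \<Rightarrow> real) \<Rightarrow> bool" where
  "micro_reversible_wrt M T w z \<longleftrightarrow>
     (\<forall>i\<in>T. \<forall>j\<in>T. w i * M i j * z j = w j * M j i * z i)"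

end

theory Submission
  imports Defs
begin

text \<open>Put \<open>F i j = w\<^sub>i M\<^sub>i\<^sub>j z\<^sub>j - w\<^sub>j M\<^sub>j\<^sub>i z\<^sub>i\<close>. This matrix is antisymmetric, and the two
  eigenvector equations for \<open>\<mu>\<close> say exactly that its row sums vanish. It inherits the
  tridiagonal pattern of the core, and an antisymmetric tridiagonal matrix with zero row sums
  is zero: once the rows above row \<open>a\<close> vanish, antisymmetry leaves \<open>F a (a+1)\<close> as the
  only possibly nonzero entry of row \<open>a\<close>, so it equals the row sum \<open>0\<close>.\<close>

lemma tridiagonal_antisym_zero_row_sums_eq_0:
  fixes G :: "nat \<Rightarrow> nat \<Rightarrow> 'a::real_vector"
  assumes antisym: "\<And>a b. a < n \<Longrightarrow> b < n \<Longrightarrow> G a b = - G b a"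
    and tridiagonal: "\<And>a b. a < n \<Longrightarrow> b < n \<Longrightarrow> a + 1 < b \<Longrightarrow> G a b = 0"
    and row_sum: "\<And>a. a < n \<Longrightarrow> (\<Sum>b<n. G a b) = 0"
    and "a < n" "b < n"
  shows "G a b = 0"
proof -
  have "\<forall>b<n. G a b = 0" if "a < n" for a
    using that
  proof (induction a rule: less_induct)
    case (less a)
    have off_super: "G a b = 0" if "b < n" "b \<noteq> a + 1" for b
    proof -
      consider "b < a" | "b = a" | "a + 1 < b" using \<open>b \<noteq> a + 1\<close> by linarith
      then show ?thesis
      proof cases
        case 1
        then have "G b a = 0" using less \<open>b < n\<close> by blast
        moreover have "G a b = - G b a" using antisym less.prems \<open>b < n\<close> by blast
        ultimately show ?thesis by simp
      next
        case 2
        then have "G a a = - G a a" using antisym less.prems by blast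
        then show ?thesis using 2 by (simp add: eq_neg_iff_add_eq_0 scaleR_2[symmetric])
      next
        case 3
        then show ?thesis using tridiagonal less.prems \<open>b < n\<close> by blast
      qed
    qed
    have "G a (a + 1) = 0" if "a + 1 < n"
    proof -
      have "(\<Sum>b<n. G a b) = (\<Sum>b\<in>{a + 1}. G a b)"
        using that off_super by (intro sum.mono_neutral_right) auto
      then show ?thesis using row_sum less.prems by simp
    qed
    then show ?case using off_super by fastforce
  qed
  then show ?thesis using assms(4,5) by blast
qed

lemma eigenvectors_balance_row_sum_eq_0:
  fixes M :: "'i \<Rightarrow> 'i \<Rightarrow> 'a::comm_ring"
  assumes left: "(\<Sum>j\<in>T. w j * M j i) = \<mu> * w i"
    and right: "(\<Sum>j\<in>T. M i j * z j) = \<mu> * z i"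
  shows "(\<Sum>j\<in>T. w i * M i j * z j - w j * M j i * z i) = 0"
proof -
  have "(\<Sum>j\<in>T. w i * M i j * z j - w j * M j i * z i)
      = w i * (\<Sum>j\<in>T. M i j * z j) - z i * (\<Sum>j\<in>T. w j * M j i)"
    by (simp add: sum_subtractf sum_distrib_left algebra_simps)
  also have "\<dots> = 0"
    using left right by (simp add: algebra_simps)
  finally show ?thesis .
qed

theorem lemma2:
  fixes N :: nat and M :: "nat \<Rightarrow> nat \<Rightarrow> real" and T :: "nat set"
    and \<mu> :: real and w z :: "nat \<Rightarrow> real"
  assumes "N \<ge> 4"
    and "admissible_wrt N 2 M T"
    and "tridiagonal_on T M"
    and "char_triple M T \<mu> w z"
  shows "micro_reversible_wrt M T w z"
proof -
  obtain \<sigma> where \<sigma>: "bij_betw \<sigma> {..<card T} T"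
    and tri: "\<And>a b. a < card T \<Longrightarrow> b < card T \<Longrightarrow> a + 1 < b \<or> b + 1 < a \<Longrightarrow> M (\<sigma> a) (\<sigma> b) = 0"
    using assms(3) unfolding tridiagonal_on_def by blast
  define F where "F i j = w i * M i j * z j - w j * M j i * z i" for i j
  have row_sum: "(\<Sum>b<card T. F (\<sigma> a) (\<sigma> b)) = 0" if "a < card T" for a
  proof -
    have "\<sigma> a \<in> T" using \<sigma> that by (blast dest: bij_betwE)
    then have "(\<Sum>j\<in>T. F (\<sigma> a) j) = 0"
      using assms(4) unfolding F_def char_triple_def
      by (intro eigenvectors_balance_row_sum_eq_0) auto
    then show ?thesis by (simp add: sum.reindex_bij_betw[OF \<sigma>])
  qed
  have flux_zero: "F (\<sigma> a) (\<sigma> b) = 0" if "a < card T" "b < card T" for a b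
  proof (rule tridiagonal_antisym_zero_row_sums_eq_0[where G = "\<lambda>a b. F (\<sigma> a) (\<sigma> b)"])
    show "F (\<sigma> a) (\<sigma> b) = - F (\<sigma> b) (\<sigma> a)" for a b
      by (simp add: F_def)
    show "F (\<sigma> a) (\<sigma> b) = 0" if "a < card T" "b < card T" "a + 1 < b" for a b
      using tri that by (simp add: F_def)
  qed (use row_sum that in auto)
  show ?thesis
    unfolding micro_reversible_wrt_def
  proof (intro ballI)
    fix i j
    assume "i \<in> T" "j \<in> T"
    then obtain a b where "a < card T" "b < card T" "i = \<sigma> a" "j = \<sigma> b"
      using \<sigma> unfolding bij_betw_def by blast
    then show "w i * M i j * z j = w j * M j i * z i"
      using flux_zero by (simp add: F_def)
  qed
qed

end
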